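(* Let $n\ge1$, $\lambda>0$, $1=x_0<x_1<\dots<x_m$, $\lambda_j=x_j\lambda$, $\gamma_j=\prod_{l\ne j}\frac{-x_l}{x_j-x_l}$, $\Lambda=\sum_j|\gamma_j|$. For each $\theta$ let $R_M(\theta)=\sum_{j=0}^m\gamma_jR_{\lambda_j}(\theta)$, where $R_{\lambda_j}(\theta)\in[-1,1]$ is the sensor response (expectation of an observable $O$ with $\|O\|_\infty\le1$) at noise level $\lambda_j$, and assume $R_M$ is a trigonometric polynomial of degree $n$. Let $\theta_k$, $k=1,\dots,2n+1$, be equally spaced nodes in $[0,2\pi)$ with spacing $2\pi/(2n+1)$, and at each node let $\overline{R}_M(\theta_k,N_k)=\sum_j\gamma_j\overline{R}_{\lambda_j}(\theta_k,N_j)$ with $N_j=N_k|\gamma_j|/\Lambda$ independent shots at noise level $\lambda_j$ ($\overline{R}_{\lambda_j}$ the empirical mean of single-shot outcomes). Let $\tilde{R}_M(\theta,N_I)$ be the unique trigonometric polynomial of degree $n$ interpolating the points $(\theta_k,\overline{R}_M(\theta_k,N_k))$, $N_I=\sum_kN_k$. Then, to ensure with a (constant) high probability that $|R_M(\theta)-\tilde{R}_M(\theta,N_I)|\le\delta$ for all $\theta$, it suffices that the number of shots per node satisfies $N_k\in\Omega\!\Big(\frac{\Lambda^3\log^3(n)}{\max_j|\gamma_j|\,\delta^2}\Big)$.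
   Context: A trigonometric polynomial of degree $n$ is a function $\theta\mapsto c+\sum_{s=1}^n[a_s\cos(s\theta)+b_s\sin(s\theta)]$. Single-shot outcomes are eigenvalues of $O$, lying in $[-1,1]$; all shots are independent. *)

theory Defs
  imports "HOL-Probability.Probability"
begin

definition trig_poly :: "nat \<Rightarrow> (real \<Rightarrow> real) \<Rightarrow> bool" where
  "trig_poly n f \<longleftrightarrow> (\<exists>c a b. \<forall>\<theta>.
      f \<theta> = c + (\<Sum>s=1..n. a s * cos (real s * \<theta>) + b s * sin (real s * \<theta>)))"

definition gam :: "(nat \<Rightarrow> real) \<Rightarrow> nat \<Rightarrow> nat \<Rightarrow> real" where
  "gam x m j = (\<Prod>l\<in>{0..m}-{j}. - x l / (x j - x l))"

definition Lam :: "(nat \<Rightarrow> real) \<Rightarrow> nat \<Rightarrow> real" where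
  "Lam x m = (\<Sum>j\<le>m. \<bar>gam x m j\<bar>)"

definition max_gam :: "(nat \<Rightarrow> real) \<Rightarrow> nat \<Rightarrow> real" where
  "max_gam x m = Max ((\<lambda>j. \<bar>gam x m j\<bar>) ` {0..m})"

text \<open>Sensor response at noise level l and angle theta: expectation of the single-shot
  outcome distribution D l theta.\<close>
definition resp :: "(real \<Rightarrow> real \<Rightarrow> real measure) \<Rightarrow> real \<Rightarrow> real \<Rightarrow> real" where
  "resp D l \<theta> = (\<integral>y. y \<partial>(D l \<theta>))"

definition RM :: "(real \<Rightarrow> real \<Rightarrow> real measure) \<Rightarrow> (nat \<Rightarrow> real) \<Rightarrow> real \<Rightarrow> nat \<Rightarrow> real \<Rightarrow> real" where
  "RM D x lam m \<theta> = (\<Sum>j\<le>m. gam x m j * resp D (x j * lam) \<theta>)"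

text \<open>Nodes theta_k, k = 0..2n (0-based), spacing 2pi/(2n+1).\<close>
definition node :: "nat \<Rightarrow> nat \<Rightarrow> real" where
  "node n k = 2 * pi * real k / real (2 * n + 1)"

definition shots :: "(nat \<Rightarrow> real) \<Rightarrow> nat \<Rightarrow> nat \<Rightarrow> nat \<Rightarrow> nat" where
  "shots x m Nk j = nat \<lceil>real Nk * \<bar>gam x m j\<bar> / Lam x m\<rceil>"

text \<open>Index set of all independent single shots: (node k, level j, shot s).\<close>
definition idx :: "nat \<Rightarrow> nat \<Rightarrow> (nat \<Rightarrow> real) \<Rightarrow> (nat \<Rightarrow> nat) \<Rightarrow> (nat \<times> nat \<times> nat) set" where
  "idx n m x N = {(k, j, s). k < 2 * n + 1 \<and> j \<le> m \<and> s < shots x m (N k) j}"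

definition sample_space :: "nat \<Rightarrow> nat \<Rightarrow> (nat \<Rightarrow> real) \<Rightarrow> real \<Rightarrow> (real \<Rightarrow> real \<Rightarrow> real measure)
    \<Rightarrow> (nat \<Rightarrow> nat) \<Rightarrow> (nat \<times> nat \<times> nat \<Rightarrow> real) measure" where
  "sample_space n m x lam D N =
     (\<Pi>\<^sub>M i\<in>idx n m x N. (case i of (k, j, s) \<Rightarrow> D (x j * lam) (node n k)))"

definition est :: "(nat \<Rightarrow> real) \<Rightarrow> nat \<Rightarrow> (nat \<Rightarrow> nat) \<Rightarrow> (nat \<times> nat \<times> nat \<Rightarrow> real) \<Rightarrow> nat \<Rightarrow> real" where
  "est x m N \<omega> k = (\<Sum>j\<le>m. gam x m j *
       ((\<Sum>s<shots x m (N k) j. \<omega> (k, j, s)) / real (shots x m (N k) j)))"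

definition interp :: "nat \<Rightarrow> (nat \<Rightarrow> real) \<Rightarrow> real \<Rightarrow> real" where
  "interp n ys = (THE p. trig_poly n p \<and> (\<forall>k<2 * n + 1. p (node n k) = ys k))"

end

theory Submission
  imports Defs "HOL-Analysis.Harmonic_Numbers"
begin

text \<open>
  At the equispaced nodes the discrete sums of cis(q node k) vanish unless 2n+1 divides q, so the
  normalised, shifted Dirichlet kernels form the Lagrange basis of trigonometric interpolation and
  reproduce every trigonometric polynomial of degree n; hence the interpolation error is
  sum_k (R_M(node k) - estimate_k) * lagrange_k(theta).  The Lebesgue function
  sum_k |lagrange_k(theta)| is O(log n) (at most 12 ln(n+1)), so it suffices that every node
  estimate is within t = delta / (12 ln(n+1)).  Each node estimate is a weighted sum of independent
  shots in [-1,1] with weights gamma_j / N_j; since N_j >= N_k |gamma_j| / Lambda, Hoeffding's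
  inequality bounds its tail by 2 exp(-t^2 N_k / (2 Lambda^2)), and a union bound over the 2n+1
  nodes finishes the proof.
\<close>

lemma trig_polyI:
  assumes "\<And>\<theta>. f \<theta> = c + (\<Sum>s=1..n. a s * cos (real s * \<theta>) + b s * sin (real s * \<theta>))"
  shows "trig_poly n f"
  unfolding trig_poly_def using assms by blast

lemma trig_poly_const: "trig_poly n (\<lambda>\<theta>. c)"
  by (rule trig_polyI[where a="\<lambda>_. 0" and b="\<lambda>_. 0"]) simp

lemma trig_poly_add:
  assumes "trig_poly n f" "trig_poly n g"
  shows "trig_poly n (\<lambda>\<theta>. f \<theta> + g \<theta>)"
proof -
  obtain c a b where f: "\<And>t. f t = c + (\<Sum>s=1..n. a s * cos (real s * t) + b s * sin (real s * t))"
    using assms(1) unfolding trig_poly_def by blast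
  obtain c' a' b' where g: "\<And>t. g t = c' + (\<Sum>s=1..n. a' s * cos (real s * t) + b' s * sin (real s * t))"
    using assms(2) unfolding trig_poly_def by blast
  have "f t + g t = (c + c') + (\<Sum>s=1..n. (a s + a' s) * cos (real s * t) + (b s + b' s) * sin (real s * t))"
    for t unfolding f g by (simp add: sum.distrib algebra_simps)
  then show ?thesis by (rule trig_polyI)
qed

lemma trig_poly_cmult:
  assumes "trig_poly n f"
  shows "trig_poly n (\<lambda>\<theta>. d * f \<theta>)"
proof -
  obtain c a b where f: "\<And>t. f t = c + (\<Sum>s=1..n. a s * cos (real s * t) + b s * sin (real s * t))"
    using assms unfolding trig_poly_def by blast
  have "d * f t = d * c + (\<Sum>s=1..n. (d * a s) * cos (real s * t) + (d * b s) * sin (real s * t))"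
    for t unfolding f by (simp add: sum_distrib_left algebra_simps)
  then show ?thesis by (rule trig_polyI)
qed

lemma trig_poly_sum:
  assumes "finite A" "\<And>i. i \<in> A \<Longrightarrow> trig_poly n (f i)"
  shows "trig_poly n (\<lambda>\<theta>. \<Sum>i\<in>A. f i \<theta>)"
  using assms by (induction A rule: finite_induct) (auto intro: trig_poly_const trig_poly_add)

lemma trig_poly_cos_shift:
  assumes "r \<in> {1..n}"
  shows "trig_poly n (\<lambda>\<theta>. cos (real r * (\<theta> - a)))"
proof (rule trig_polyI)
  fix t
  let ?a = "\<lambda>s. if s = r then cos (real r * a) else 0"
  let ?b = "\<lambda>s. if s = r then sin (real r * a) else 0"
  have "(\<Sum>s=1..n. ?a s * cos (real s * t) + ?b s * sin (real s * t)) =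
      (\<Sum>s=1..n. if s = r then cos (real r * a) * cos (real r * t) + sin (real r * a) * sin (real r * t) else 0)"
    by (rule sum.cong) auto
  also have "\<dots> = cos (real r * (t - a))"
    using assms by (simp add: cos_diff right_diff_distrib algebra_simps)
  finally show "cos (real r * (t - a)) = 0 + (\<Sum>s=1..n. ?a s * cos (real s * t) + ?b s * sin (real s * t))"
    by simp
qed

lemma trig_poly_continuous:
  assumes "trig_poly n p"
  shows "continuous_on UNIV p"
proof -
  obtain c a b where "\<And>\<theta>. p \<theta> = c + (\<Sum>s=1..n. a s * cos (real s * \<theta>) + b s * sin (real s * \<theta>))"
    using assms unfolding trig_poly_def by blast
  then have "p = (\<lambda>\<theta>. c + (\<Sum>s=1..n. a s * cos (real s * \<theta>) + b s * sin (real s * \<theta>)))" by blast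
  then show ?thesis by (auto intro!: continuous_intros)
qed

section \<open>The Dirichlet kernel and interpolation at equispaced nodes\<close>

lemma cis_eq_1_iff_dvd:
  fixes q :: int
  assumes M: "0 < M"
  shows "cis (2 * pi * of_int q / real M) = 1 \<longleftrightarrow> int M dvd q"
proof
  assume "cis (2 * pi * of_int q / real M) = 1"
  then have "cos (2 * pi * of_int q / real M) = 1" by (metis cis.sel(1) one_complex.sel(1))
  then obtain l :: int where "2 * pi * of_int q / real M = of_int l * 2 * pi"
    by (auto simp: cos_one_2pi_int)
  then have "of_int q = real M * of_int l" using M by (simp add: field_simps)
  then have "q = int M * l" by (metis of_int_eq_iff of_int_mult of_int_of_nat_eq)
  then show "int M dvd q" by simp
next
  assume "int M dvd q"
  then obtain l where "q = int M * l" by (auto elim: dvdE)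
  then have "2 * pi * of_int q / real M = 2 * pi * of_int l" using M by simp
  then have "cis (2 * pi * of_int q / real M) = cis (2 * pi * of_int l)" by (simp only:)
  also have "\<dots> = 1" by (rule cis_multiple_2pi) simp
  finally show "cis (2 * pi * of_int q / real M) = 1" .
qed

lemma node_sum_cis:
  fixes q :: int
  shows "(\<Sum>k<2*n+1. cis (a + of_int q * node n k)) =
         (if int (2*n+1) dvd q then of_nat (2*n+1) * cis a else 0)"
proof -
  define M where "M = 2*n+1"
  have M: "0 < M" by (simp add: M_def)
  define z where "z = cis (2 * pi * of_int q / real M)"
  have "cis (a + of_int q * node n k) = cis a * z ^ k" for k
  proof -
    have "cis a * z ^ k = cis (a + real k * (2 * pi * of_int q / real M))"
      unfolding z_def Complex.DeMoivre cis_mult by simp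
    also have "a + real k * (2 * pi * of_int q / real M) = a + of_int q * node n k"
      by (simp add: node_def M_def)
    finally show ?thesis by simp
  qed
  then have sum_eq: "(\<Sum>k<M. cis (a + of_int q * node n k)) = cis a * (\<Sum>k<M. z ^ k)"
    by (simp add: sum_distrib_left)
  show ?thesis
  proof (cases "int M dvd q")
    case True
    then have "z = 1" unfolding z_def using cis_eq_1_iff_dvd[OF M] by blast
    then show ?thesis using sum_eq True by (simp add: M_def)
  next
    case False
    then have "z \<noteq> 1" unfolding z_def using cis_eq_1_iff_dvd[OF M] by blast
    moreover have "z ^ M = cis (2 * pi * of_int q)" unfolding z_def Complex.DeMoivre using M by simp
    moreover have "cis (2 * pi * of_int q) = 1" by (rule cis_multiple_2pi) simp
    ultimately have "(\<Sum>k<M. z ^ k) = 0" by (simp add: geometric_sum)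
    then show ?thesis using sum_eq False by (simp add: M_def)
  qed
qed

definition dirichlet :: "nat \<Rightarrow> real \<Rightarrow> real" where
  "dirichlet n t = 1 + 2 * (\<Sum>r=1..n. cos (real r * t))"

lemma dirichlet_eq_sum_cis:
  "complex_of_real (dirichlet n t) = (\<Sum>r\<in>{-int n..int n}. cis (of_int r * t))"
proof (induction n)
  case 0
  then show ?case by (simp add: dirichlet_def)
next
  case (Suc n)
  have "{-int (Suc n)..int (Suc n)} = insert (int (Suc n)) (insert (- int (Suc n)) {-int n..int n})"
    by auto
  then have "(\<Sum>r\<in>{-int (Suc n)..int (Suc n)}. cis (of_int r * t)) =
      cis (real (Suc n) * t) + cis (- (real (Suc n) * t)) + (\<Sum>r\<in>{-int n..int n}. cis (of_int r * t))"
    by (simp add: algebra_simps)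
  also have "cis (real (Suc n) * t) + cis (- (real (Suc n) * t)) =
      complex_of_real (2 * cos (real (Suc n) * t))"
    using complex_add_cnj[of "cis (real (Suc n) * t)"] by (simp add: cis_cnj)
  finally show ?case by (simp add: dirichlet_def Suc.IH[symmetric])
qed

lemma dirichlet_mult_sin_half: "dirichlet n t * sin (t / 2) = sin (real (2*n+1) * t / 2)"
proof (induction n)
  case 0
  then show ?case by (simp add: dirichlet_def)
next
  case (Suc n)
  have "dirichlet (Suc n) t * sin (t / 2) =
      sin (real (2*n+1) * t / 2) + 2 * cos (real (Suc n) * t) * sin (t / 2)"
    using Suc.IH by (simp add: dirichlet_def algebra_simps)
  also have "2 * cos (real (Suc n) * t) * sin (t / 2) =
      sin (real (Suc n) * t + t / 2) - sin (real (Suc n) * t - t / 2)"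
    by (simp add: sin_add sin_diff)
  also have "real (Suc n) * t - t / 2 = real (2*n+1) * t / 2" by (simp add: field_simps)
  also have "real (Suc n) * t + t / 2 = real (2 * Suc n + 1) * t / 2" by (simp add: field_simps)
  finally show ?case by simp
qed

lemma abs_dirichlet_le: "\<bar>dirichlet n t\<bar> \<le> real (2*n+1)"
proof -
  have "\<bar>\<Sum>r=1..n. cos (real r * t)\<bar> \<le> (\<Sum>r=1..n. 1)"
    by (rule order_trans[OF sum_abs sum_mono]) simp
  then show ?thesis unfolding dirichlet_def by simp
qed

lemma dirichlet_periodic: "dirichlet n (t + 2 * pi * of_int w) = dirichlet n t"
proof -
  have "cos (real r * (t + 2 * pi * of_int w)) = cos (real r * t)" for r
  proof -
    have "real r * (t + 2 * pi * of_int w) = real r * t + 2 * pi * of_int (int r * w)"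
      by (simp add: algebra_simps)
    then show ?thesis by (simp only: cos_add cos_int_2pin sin_int_2pin)
  qed
  then show ?thesis unfolding dirichlet_def by simp
qed

definition trig_lagrange :: "nat \<Rightarrow> nat \<Rightarrow> real \<Rightarrow> real" where
  "trig_lagrange n k \<theta> = dirichlet n (\<theta> - node n k) / real (2*n+1)"

lemma sum_cis_node_trig_lagrange:
  fixes s :: int
  assumes s: "\<bar>s\<bar> \<le> int n"
  shows "(\<Sum>k<2*n+1. cis (of_int s * node n k) * of_real (trig_lagrange n k \<theta>)) = cis (of_int s * \<theta>)"
proof -
  let ?M = "2*n+1" and ?R = "{-int n..int n}"
  have freq: "int ?M dvd (s - r) \<longleftrightarrow> r = s" if "r \<in> ?R" for r
  proof
    assume "int ?M dvd (s - r)"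
    moreover have "\<bar>s - r\<bar> < int ?M" using that s by auto
    ultimately show "r = s" using dvd_imp_le_int[of "s - r" "int ?M"] by force
  qed simp
  have "(\<Sum>k<?M. cis (of_int s * node n k) * of_real (dirichlet n (\<theta> - node n k))) =
      (\<Sum>r\<in>?R. \<Sum>k<?M. cis (of_int r * \<theta> + of_int (s - r) * node n k))"
    by (subst sum.swap) (simp add: dirichlet_eq_sum_cis sum_distrib_left cis_mult algebra_simps)
  also have "\<dots> = (\<Sum>r\<in>?R. if r = s then of_nat ?M * cis (of_int r * \<theta>) else 0)"
  proof (intro sum.cong refl)
    fix r assume "r \<in> ?R"
    then show "(\<Sum>k<?M. cis (of_int r * \<theta> + of_int (s - r) * node n k)) =
        (if r = s then of_nat ?M * cis (of_int r * \<theta>) else 0)"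
      unfolding node_sum_cis freq[OF \<open>r \<in> ?R\<close>] by simp
  qed
  also have "\<dots> = of_nat ?M * cis (of_int s * \<theta>)"
    using s by (simp add: abs_le_iff)
  finally have "(\<Sum>k<?M. cis (of_int s * node n k) * of_real (dirichlet n (\<theta> - node n k))) / of_nat ?M
      = cis (of_int s * \<theta>)" using of_nat_neq_0[of "2*n", where 'a=complex] by simp
  then show ?thesis
    by (simp only: trig_lagrange_def of_real_divide times_divide_eq_right
        sum_divide_distrib[symmetric] of_real_of_nat_eq)
qed

lemma sum_cos_node_trig_lagrange:
  assumes "s \<le> n"
  shows "(\<Sum>k<2*n+1. cos (real s * node n k) * trig_lagrange n k \<theta>) = cos (real s * \<theta>)"
  using arg_cong[where f=Re, OF sum_cis_node_trig_lagrange[of "int s" n \<theta>]] assms by simp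

lemma sum_sin_node_trig_lagrange:
  assumes "s \<le> n"
  shows "(\<Sum>k<2*n+1. sin (real s * node n k) * trig_lagrange n k \<theta>) = sin (real s * \<theta>)"
  using arg_cong[where f=Im, OF sum_cis_node_trig_lagrange[of "int s" n \<theta>]] assms by simp

lemma trig_poly_eq_lagrange_sum:
  assumes "trig_poly n p"
  shows "p \<theta> = (\<Sum>k<2*n+1. p (node n k) * trig_lagrange n k \<theta>)"
proof -
  obtain c a b where p: "\<And>t. p t = c + (\<Sum>s=1..n. a s * cos (real s * t) + b s * sin (real s * t))"
    using assms unfolding trig_poly_def by blast
  let ?L = "trig_lagrange n"
  have "(\<Sum>k<2*n+1. p (node n k) * ?L k \<theta>) = c * (\<Sum>k<2*n+1. ?L k \<theta>) +
      (\<Sum>k<2*n+1. \<Sum>s=1..n. a s * (cos (real s * node n k) * ?L k \<theta>) +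
                                 b s * (sin (real s * node n k) * ?L k \<theta>))"
    unfolding p by (simp add: sum.distrib sum_distrib_left sum_distrib_right algebra_simps)
  also have "\<dots> = c * (\<Sum>k<2*n+1. ?L k \<theta>) +
      (\<Sum>s=1..n. a s * (\<Sum>k<2*n+1. cos (real s * node n k) * ?L k \<theta>) +
                 b s * (\<Sum>k<2*n+1. sin (real s * node n k) * ?L k \<theta>))"
    by (subst sum.swap) (simp only: sum.distrib sum_distrib_left)
  also have "\<dots> = c + (\<Sum>s=1..n. a s * cos (real s * \<theta>) + b s * sin (real s * \<theta>))"
  proof -
    have "s \<le> n \<Longrightarrow> a s * (\<Sum>k<2*n+1. cos (real s * node n k) * ?L k \<theta>) +
        b s * (\<Sum>k<2*n+1. sin (real s * node n k) * ?L k \<theta>) =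
        a s * cos (real s * \<theta>) + b s * sin (real s * \<theta>)" for s
      by (simp only: sum_cos_node_trig_lagrange sum_sin_node_trig_lagrange)
    then show ?thesis
      using sum_cos_node_trig_lagrange[of 0 n \<theta>] by (simp del: sum.lessThan_Suc)
  qed
  finally show ?thesis by (simp add: p)
qed

lemma trig_poly_trig_lagrange: "trig_poly n (trig_lagrange n k)"
proof -
  have "trig_poly n (\<lambda>\<theta>. dirichlet n (\<theta> - node n k))"
    unfolding dirichlet_def
    by (intro trig_poly_add trig_poly_const trig_poly_cmult trig_poly_sum trig_poly_cos_shift) auto
  then show ?thesis
    using trig_poly_cmult[of n _ "1 / real (2*n+1)"] by (simp add: trig_lagrange_def[abs_def])
qed

lemma trig_lagrange_node:
  assumes i: "i < 2*n+1" and k: "k < 2*n+1"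
  shows "trig_lagrange n k (node n i) = (if i = k then 1 else 0)"
proof (cases "i = k")
  case True
  then show ?thesis by (simp add: trig_lagrange_def dirichlet_def)
next
  case False
  define M where "M = 2*n+1"
  have Mpos: "real M > 0" by (simp add: M_def)
  define t where "t = node n i - node n k"
  have t: "t = 2 * pi * (real i - real k) / real M"
    by (simp add: t_def node_def M_def diff_divide_distrib right_diff_distrib)
  have "sin (real M * t / 2) = 0"
  proof -
    have "real M * t / 2 = of_int (int i - int k) * pi" using Mpos by (simp add: t)
    then show ?thesis unfolding sin_zero_iff_int2 by blast
  qed
  moreover have "sin (t / 2) \<noteq> 0"
  proof
    assume "sin (t / 2) = 0"
    then obtain j :: int where "t / 2 = of_int j * pi" by (auto simp: sin_zero_iff_int2)
    then have "pi * ((real i - real k) / real M) = pi * of_int j" by (simp add: t)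
    then have "(real i - real k) / real M = of_int j"
      using pi_gt_zero by (metis mult_cancel_left less_irrefl times_divide_eq_right)
    then have "real i - real k = real M * of_int j" using Mpos by (simp add: field_simps)
    then have "int i - int k = int M * j"
      by (metis of_int_eq_iff of_int_mult of_int_of_nat_eq of_int_diff)
    moreover have "\<bar>int i - int k\<bar> < int M" using i k by (auto simp: M_def)
    ultimately show False using False dvd_imp_le_int[of "int i - int k" "int M"] by force
  qed
  ultimately have "dirichlet n t = 0"
    using dirichlet_mult_sin_half[of n t] by (simp add: M_def)
  then show ?thesis using False by (simp add: trig_lagrange_def t_def)
qed

lemma trig_poly_lagrange_sum: "trig_poly n (\<lambda>\<theta>. \<Sum>k<2*n+1. ys k * trig_lagrange n k \<theta>)"
  by (intro trig_poly_sum trig_poly_cmult trig_poly_trig_lagrange) simp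

lemma interp_eq_lagrange_sum: "interp n ys = (\<lambda>\<theta>. \<Sum>k<2*n+1. ys k * trig_lagrange n k \<theta>)"
  unfolding interp_def
proof (rule the_equality)
  have "(\<Sum>j<2*n+1. ys j * trig_lagrange n j (node n k)) = ys k" if k: "k < 2*n+1" for k
  proof -
    have "(\<Sum>j<2*n+1. ys j * trig_lagrange n j (node n k)) = (\<Sum>j<2*n+1. if j = k then ys j else 0)"
      by (rule sum.cong[OF refl]) (use k in \<open>auto simp: trig_lagrange_node\<close>)
    also have "\<dots> = ys k" using k by simp
    finally show ?thesis .
  qed
  then show "trig_poly n (\<lambda>\<theta>. \<Sum>k<2*n+1. ys k * trig_lagrange n k \<theta>) \<and>
      (\<forall>k<2*n+1. (\<Sum>j<2*n+1. ys j * trig_lagrange n j (node n k)) = ys k)"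
    using trig_poly_lagrange_sum by blast
next
  fix p assume p: "trig_poly n p \<and> (\<forall>k<2*n+1. p (node n k) = ys k)"
  show "p = (\<lambda>\<theta>. \<Sum>k<2*n+1. ys k * trig_lagrange n k \<theta>)"
  proof
    fix \<theta>
    show "p \<theta> = (\<Sum>k<2*n+1. ys k * trig_lagrange n k \<theta>)"
      using trig_poly_eq_lagrange_sum[of n p \<theta>] p by simp
  qed
qed

section \<open>The Lebesgue constant\<close>

lemma sin_ge_third:
  fixes x :: real
  assumes "0 \<le> x" "x \<le> 2"
  shows "x / 3 \<le> sin x"
proof -
  have "\<bar>sin x - (\<Sum>m<3. sin_coeff m * x ^ m)\<bar> \<le> inverse (fact 3) * \<bar>x\<bar> ^ 3"
    by (rule Maclaurin_sin_bound)
  moreover have "(\<Sum>m<3. sin_coeff m * x ^ m) = x"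
    by (simp add: numeral_3_eq_3 sin_coeff_def)
  ultimately have "\<bar>sin x - x\<bar> \<le> x ^ 3 / 6" using assms by (simp add: fact_numeral)
  then have "x - x ^ 3 / 6 \<le> sin x" by arith
  moreover have "x ^ 3 \<le> 4 * x"
  proof -
    have "x\<^sup>2 \<le> 2\<^sup>2" using assms by (intro power_mono) auto
    then have "x * x\<^sup>2 \<le> x * 4" using assms by (intro mult_left_mono) auto
    then show ?thesis by (simp add: power3_eq_cube power2_eq_square algebra_simps)
  qed
  ultimately show ?thesis by simp
qed

lemma sin_ge_min_dist_third:
  fixes x :: real
  assumes "0 \<le> x" "x \<le> pi"
  shows "min x (pi - x) / 3 \<le> sin x"
proof (cases "x \<le> pi / 2")
  case True
  then have "x / 3 \<le> sin x" using assms pi_half_less_two by (intro sin_ge_third) auto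
  then show ?thesis by (auto simp: min_def)
next
  case False
  then have "(pi - x) / 3 \<le> sin (pi - x)" using assms pi_half_less_two by (intro sin_ge_third) auto
  then show ?thesis by (auto simp: min_def)
qed

lemma abs_dirichlet_mult_sin_le:
  assumes "0 < x" "x < pi"
  shows "\<bar>dirichlet n (2 * x)\<bar> * sin x \<le> 1"
proof -
  have "\<bar>dirichlet n (2 * x)\<bar> * sin x = \<bar>dirichlet n (2 * x) * sin (2 * x / 2)\<bar>"
    using sin_gt_zero[OF assms] by (simp add: abs_mult)
  also have "\<dots> = \<bar>sin (real (2*n+1) * (2 * x) / 2)\<bar>"
    by (simp only: dirichlet_mult_sin_half)
  also have "\<dots> \<le> 1" by (rule abs_sin_le_one)
  finally show ?thesis .
qed

lemma dirichlet_between_nodes_le: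
  assumes \<beta>: "0 \<le> \<beta>" "\<beta> < 1" and r: "1 \<le> r" "r < 2*n"
  shows "\<bar>dirichlet n (2 * pi * (\<beta> + real r) / real (2*n+1))\<bar> / real (2*n+1)
          \<le> 1 / real r + 1 / real (2*n - r)"
proof -
  define M where "M = real (2*n+1)"
  define y where "y = \<beta> + real r"
  define x where "x = pi * y / M"
  have Mpos: "M > 0" by (simp add: M_def)
  have y: "real r \<le> y" "real (2*n - r) < M - y" using \<beta> r by (simp_all add: y_def M_def of_nat_diff)
  have x: "0 < x" "x < pi"
    using Mpos y r by (simp_all add: x_def field_simps)
  have "3 * y \<le> pi * y" "3 * (M - y) \<le> pi * (M - y)"
    using pi_gt3 y r by (intro mult_right_mono; simp)+
  moreover have "M * (x / 3) = pi * y / 3" "M * ((pi - x) / 3) = pi * (M - y) / 3"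
    using Mpos by (simp_all add: x_def field_simps)
  ultimately have "min y (M - y) \<le> min (M * (x / 3)) (M * ((pi - x) / 3))"
    by (intro min.mono) simp_all
  also have "\<dots> = M * (min x (pi - x) / 3)"
    using Mpos by (simp add: min_mult_distrib_left min_divide_distrib_right)
  finally have "min (real r) (real (2*n - r)) \<le> M * (min x (pi - x) / 3)"
    using y by (meson less_imp_le min.mono order_trans)
  also have "\<dots> \<le> M * sin x"
    using x Mpos by (intro mult_left_mono sin_ge_min_dist_third) auto
  finally have sin_lb: "min (real r) (real (2*n - r)) \<le> M * sin x" .
  have min_pos: "0 < min (real r) (real (2*n - r))" using r by simp
  have sin_pos: "0 < sin x" using x by (rule sin_gt_zero)
  have "\<bar>dirichlet n (2 * x)\<bar> / M \<le> 1 / (M * sin x)"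
    using abs_dirichlet_mult_sin_le[OF x, of n] Mpos sin_pos by (simp add: field_simps)
  also have "\<dots> \<le> 1 / min (real r) (real (2*n - r))"
    using sin_lb min_pos by (intro divide_left_mono) auto
  also have "\<dots> \<le> 1 / real r + 1 / real (2*n - r)"
    using r min_pos by (auto simp: min_def)
  finally have "\<bar>dirichlet n (2 * x)\<bar> / M \<le> 1 / real r + 1 / real (2*n - r)" .
  moreover have "2 * x = 2 * pi * (\<beta> + real r) / real (2*n+1)"
    by (simp add: x_def y_def M_def)
  ultimately show ?thesis by (simp only: M_def)
qed

lemma inj_on_nat_diff_mod:
  assumes "0 < M"
  shows "inj_on (\<lambda>k. nat ((j - int k) mod int M)) {..<M}"
proof
  fix a b assume ab: "a \<in> {..<M}" "b \<in> {..<M}"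
    and "nat ((j - int a) mod int M) = nat ((j - int b) mod int M)"
  then have "(j - int a) mod int M = (j - int b) mod int M"
    using assms by (metis Euclidean_Rings.pos_mod_sign nat_eq_iff2 of_nat_0_less_iff)
  then have "int M dvd (int b - int a)" by (simp add: mod_eq_dvd_iff)
  moreover have "\<bar>int b - int a\<bar> < int M" using ab by auto
  ultimately show "a = b" using dvd_imp_le_int[of "int b - int a" "int M"] by force
qed

text \<open>
  Writing \<open>\<theta> (2n+1) / (2 pi) = j + \<beta>\<close> with \<open>0 \<le> \<beta> < 1\<close>, the offsets \<open>\<theta> - node n k\<close> are,
  modulo \<open>2 pi\<close>, distinct points \<open>2 pi (\<beta> + r) / (2n+1)\<close> of a shifted grid.
\<close>

lemma sum_abs_trig_lagrange_le_shifted: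
  obtains \<beta> where "0 \<le> \<beta>" "\<beta> < 1"
    "(\<Sum>k<2*n+1. \<bar>trig_lagrange n k \<theta>\<bar>) \<le>
       (\<Sum>r<2*n+1. \<bar>dirichlet n (2 * pi * (\<beta> + real r) / real (2*n+1))\<bar> / real (2*n+1))"
proof
  define M where "M = 2*n+1"
  have Mpos: "real M > 0" "int M > 0" by (auto simp: M_def)
  define \<alpha> where "\<alpha> = \<theta> * real M / (2 * pi)"
  define j where "j = \<lfloor>\<alpha>\<rfloor>"
  define \<beta> where "\<beta> = \<alpha> - of_int j"
  show "0 \<le> \<beta>" "\<beta> < 1" unfolding \<beta>_def j_def by linarith+
  define \<rho> where "\<rho> k = nat ((j - int k) mod int M)" for k
  define h where "h r = \<bar>dirichlet n (2 * pi * (\<beta> + real r) / real M)\<bar> / real M" for r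
  have "\<bar>trig_lagrange n k \<theta>\<bar> = h (\<rho> k)" for k
  proof -
    define w where "w = (j - int k) div int M"
    have "j - int k = (j - int k) mod int M + int M * w"
      unfolding w_def by simp
    moreover have "real (\<rho> k) = of_int ((j - int k) mod int M)"
      unfolding \<rho>_def using Mpos by simp
    ultimately have "real_of_int (j - int k) = real (\<rho> k) + real M * of_int w"
      by (metis of_int_add of_int_mult of_int_of_nat_eq)
    moreover have "\<theta> = 2 * pi * \<alpha> / real M" using Mpos by (simp add: \<alpha>_def)
    ultimately have "\<theta> - node n k = 2 * pi * (\<beta> + real (\<rho> k)) / real M + 2 * pi * of_int w"
      using Mpos by (simp add: node_def M_def \<beta>_def field_simps)
    then show ?thesis unfolding trig_lagrange_def h_def M_def by (simp add: dirichlet_periodic)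
  qed
  moreover have "inj_on \<rho> {..<M}"
    unfolding \<rho>_def by (rule inj_on_nat_diff_mod) (simp add: M_def)
  moreover have "\<rho> k < M" for k
    unfolding \<rho>_def using Mpos by (simp add: nat_less_iff)
  ultimately have "(\<Sum>k<M. \<bar>trig_lagrange n k \<theta>\<bar>) = (\<Sum>r\<in>\<rho> ` {..<M}. h r)"
    by (simp add: sum.reindex)
  also have "\<dots> \<le> (\<Sum>r<M. h r)"
    using \<open>\<And>k. \<rho> k < M\<close> by (intro sum_mono2) (auto simp: h_def)
  finally show "(\<Sum>k<2*n+1. \<bar>trig_lagrange n k \<theta>\<bar>) \<le>
       (\<Sum>r<2*n+1. \<bar>dirichlet n (2 * pi * (\<beta> + real r) / real (2*n+1))\<bar> / real (2*n+1))"
    by (simp add: M_def h_def)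
qed

lemma harm_le_one_plus_ln: "1 \<le> N \<Longrightarrow> harm N \<le> 1 + ln (real N)"
  using euler_mascheroni_sequence_decreasing[of 1 N] by (simp add: harm_def)

lemma sum_le_two_harm:
  fixes h :: "nat \<Rightarrow> real"
  assumes n: "n \<ge> 1"
    and ends: "h 0 \<le> 1" "h (2*n) \<le> 1"
    and mid: "\<And>r. 1 \<le> r \<Longrightarrow> r < 2*n \<Longrightarrow> h r \<le> 1 / real r + 1 / real (2*n - r)"
  shows "(\<Sum>r<2*n+1. h r) \<le> 2 + 2 * harm (2*n - 1)"
proof -
  have "{..<2*n+1} = insert 0 (insert (2*n) {1..<2*n})" using n by auto
  then have "(\<Sum>r<2*n+1. h r) = h 0 + (h (2*n) + (\<Sum>r\<in>{1..<2*n}. h r))"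
    using n by simp
  also have "(\<Sum>r\<in>{1..<2*n}. h r) \<le> (\<Sum>r\<in>{1..<2*n}. 1 / real r) + (\<Sum>r\<in>{1..<2*n}. 1 / real (2*n - r))"
    unfolding sum.distrib[symmetric] by (intro sum_mono mid) auto
  also have "(\<Sum>r\<in>{1..<2*n}. 1 / real (2*n - r)) = (\<Sum>r\<in>{1..<2*n}. 1 / real r)"
    by (rule sum.reindex_bij_witness[of _ "\<lambda>r. 2*n - r" "\<lambda>r. 2*n - r"]) auto
  also have "(\<Sum>r\<in>{1..<2*n}. 1 / real r) = harm (2*n - 1)"
    unfolding harm_def using n by (intro sum.cong) (auto simp: divide_inverse)
  finally show ?thesis using ends by simp
qed

lemma lebesgue_constant_le:
  assumes n: "n \<ge> 1"
  shows "(\<Sum>k<2*n+1. \<bar>trig_lagrange n k \<theta>\<bar>) \<le> 12 * ln (real n + 1)"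
proof -
  obtain \<beta> where \<beta>: "0 \<le> \<beta>" "\<beta> < 1" and
    shift: "(\<Sum>k<2*n+1. \<bar>trig_lagrange n k \<theta>\<bar>) \<le>
       (\<Sum>r<2*n+1. \<bar>dirichlet n (2 * pi * (\<beta> + real r) / real (2*n+1))\<bar> / real (2*n+1))"
    by (rule sum_abs_trig_lagrange_le_shifted)
  note shift
  also have "\<dots> \<le> 2 + 2 * harm (2*n - 1)"
    using abs_dirichlet_le dirichlet_between_nodes_le[OF \<beta>]
    by (intro sum_le_two_harm n) auto
  also have "harm (2*n - 1) \<le> 1 + ln (real (2*n - 1))"
    using n by (intro harm_le_one_plus_ln) auto
  also have "ln (real (2*n - 1)) \<le> ln (2 * (real n + 1))"
    using n by (intro ln_mono) auto
  also have "\<dots> = ln 2 + ln (real n + 1)"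
    by (rule ln_mult_pos) auto
  finally have "(\<Sum>k<2*n+1. \<bar>trig_lagrange n k \<theta>\<bar>) \<le> 4 + 2 * ln 2 + 2 * ln (real n + 1)"
    by simp
  moreover have "ln 2 \<le> ln (real n + 1)" using n by (intro ln_mono) auto
  ultimately show ?thesis using ln2_ge_two_thirds by linarith
qed

lemma interp_error_le:
  assumes n: "1 \<le> n" and R: "trig_poly n R" and ys: "\<And>k. k < 2*n+1 \<Longrightarrow> \<bar>R (node n k) - ys k\<bar> \<le> t"
  shows "\<bar>R \<theta> - interp n ys \<theta>\<bar> \<le> 12 * ln (real n + 1) * t"
proof -
  have t: "0 \<le> t" using ys[of 0] by simp
  have "\<bar>R \<theta> - interp n ys \<theta>\<bar> = \<bar>\<Sum>k<2*n+1. (R (node n k) - ys k) * trig_lagrange n k \<theta>\<bar>"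
    using trig_poly_eq_lagrange_sum[OF R, of \<theta>]
    by (simp add: interp_eq_lagrange_sum sum_subtractf left_diff_distrib)
  also have "\<dots> \<le> (\<Sum>k<2*n+1. t * \<bar>trig_lagrange n k \<theta>\<bar>)"
    using ys t by (intro order_trans[OF sum_abs sum_mono]) (simp add: abs_mult mult_right_mono)
  also have "\<dots> \<le> t * (12 * ln (real n + 1))"
    unfolding sum_distrib_left[symmetric] using lebesgue_constant_le[OF n] t by (rule mult_left_mono)
  finally show ?thesis by (simp add: algebra_simps)
qed

section \<open>Coordinates of finite product measures\<close>

lemma indep_vars_PiM_components:
  assumes "finite I" "I \<noteq> {}" "\<And>i. i \<in> I \<Longrightarrow> prob_space (M i)"
  shows "prob_space.indep_vars (PiM I M) M (\<lambda>i \<omega>. \<omega> i) I"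
proof -
  interpret P: prob_space "PiM I M" by (rule prob_space_PiM) (rule assms(3))
  show ?thesis
  proof (subst P.indep_vars_iff_distr_eq_PiM'[OF assms(2)])
    fix i assume "i \<in> I"
    then show "(\<lambda>\<omega>. \<omega> i) \<in> measurable (PiM I M) (M i)"
      by (rule measurable_component_singleton)
  next
    have "distr (PiM I M) (PiM I M) (\<lambda>x. \<lambda>i\<in>I. x i) = distr (PiM I M) (PiM I M) (\<lambda>x. x)"
      by (rule distr_cong) (auto simp: space_PiM PiE_def extensional_restrict)
    also have "\<dots> = PiM I (\<lambda>i. distr (PiM I M) (M i) (\<lambda>\<omega>. \<omega> i))"
      by (simp add: distr_PiM_component assms(3) cong: PiM_cong)
    finally show "distr (PiM I M) (PiM I M) (\<lambda>x. \<lambda>i\<in>I. x i) =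
        PiM I (\<lambda>i. distr (PiM I M) (M i) (\<lambda>\<omega>. \<omega> i))" .
  qed
qed

lemma borel_measurable_PiM_component:
  fixes M :: "'i \<Rightarrow> real measure"
  assumes "\<And>i. i \<in> I \<Longrightarrow> sets (M i) = sets borel"
  shows "(\<lambda>\<omega>. \<omega> i) \<in> borel_measurable (PiM I M)"
proof (cases "i \<in> I")
  case True
  have "(\<lambda>\<omega>. \<omega> i) \<in> measurable (PiM I M) (M i)" using True by (rule measurable_component_singleton)
  moreover have "measurable (PiM I M) (M i) = measurable (PiM I M) borel"
    by (rule measurable_cong_sets) (use assms True in auto)
  ultimately show ?thesis by simp
next
  case False
  then have "undefined = \<omega> i" if "\<omega> \<in> space (PiM I M)" for \<omega>
    using that by (auto simp: space_PiM PiE_def extensional_def)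
  moreover have "(\<lambda>\<omega>. undefined) \<in> borel_measurable (PiM I M)" by simp
  ultimately show ?thesis by (metis (no_types, lifting) measurable_cong)
qed

lemma integral_PiM_component:
  fixes M :: "'i \<Rightarrow> real measure"
  assumes "\<And>i. i \<in> I \<Longrightarrow> prob_space (M i)" "i \<in> I" "sets (M i) = sets borel"
  shows "(\<integral>\<omega>. \<omega> i \<partial>PiM I M) = (\<integral>y. y \<partial>M i)"
proof -
  have "(\<integral>y. y \<partial>M i) = (\<integral>y. y \<partial>distr (PiM I M) (M i) (\<lambda>\<omega>. \<omega> i))"
    by (simp only: distr_PiM_component[where M=M, OF assms(1,2)])
  also have "\<dots> = (\<integral>\<omega>. \<omega> i \<partial>PiM I M)"
    using assms(2,3) by (intro integral_distr measurable_component_singleton) (simp_all cong: measurable_cong_sets)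
  finally show ?thesis by simp
qed

lemma hoeffding_PiM_weighted_sum:
  fixes M :: "'i \<Rightarrow> real measure" and c :: "'i \<Rightarrow> real"
  assumes fin: "finite I" and M: "\<And>i. i \<in> I \<Longrightarrow> prob_space (M i)"
    "\<And>i. i \<in> I \<Longrightarrow> sets (M i) = sets borel" "\<And>i. i \<in> I \<Longrightarrow> AE y in M i. \<bar>y\<bar> \<le> 1"
    and J: "J \<subseteq> I" and \<epsilon>: "0 \<le> \<epsilon>" and pos: "0 < (\<Sum>i\<in>J. (2 * \<bar>c i\<bar>)\<^sup>2)"
  shows "measure (PiM I M) {\<omega> \<in> space (PiM I M).
            \<bar>(\<Sum>i\<in>J. c i * \<omega> i) - (\<Sum>i\<in>J. c i * (\<integral>y. y \<partial>M i))\<bar> \<ge> \<epsilon>}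
         \<le> 2 * exp (-2 * \<epsilon>\<^sup>2 / (\<Sum>i\<in>J. (2 * \<bar>c i\<bar>)\<^sup>2))"
proof -
  interpret P: prob_space "PiM I M" by (rule prob_space_PiM) (rule M)
  have "J \<noteq> {}" using pos by auto
  then have "P.indep_vars M (\<lambda>i \<omega>. \<omega> i) J"
    using J fin M(1) by (intro P.indep_vars_subset[OF indep_vars_PiM_components J]) auto
  then have indep: "P.indep_vars (\<lambda>_. borel) (\<lambda>i \<omega>. c i * \<omega> i) J"
  proof (rule P.indep_vars_compose2)
    fix i assume "i \<in> J"
    then have "measurable (M i) borel = borel_measurable borel"
      using J M(2) by (intro measurable_cong_sets) auto
    moreover have "(\<lambda>y. c i * y) \<in> borel_measurable borel" by simp
    ultimately show "(\<lambda>y. c i * y) \<in> borel_measurable (M i)" by metis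
  qed
  interpret H: Hoeffding_ineq "PiM I M" J "\<lambda>i \<omega>. c i * \<omega> i" "\<lambda>i. - \<bar>c i\<bar>" "\<lambda>i. \<bar>c i\<bar>"
    "\<Sum>i\<in>J. P.expectation (\<lambda>\<omega>. c i * \<omega> i)"
  proof unfold_locales
    show "finite J" using fin J finite_subset by blast
    fix i assume i: "i \<in> J"
    have "AE \<omega> in PiM I M. \<bar>\<omega> i\<bar> \<le> 1"
      using i J M by (intro AE_PiM_component) auto
    then show "AE \<omega> in PiM I M. c i * \<omega> i \<in> {- \<bar>c i\<bar>..\<bar>c i\<bar>}"
    proof eventually_elim
      case (elim \<omega>)
      then have "\<bar>c i * \<omega> i\<bar> \<le> \<bar>c i\<bar>" by (simp add: abs_mult mult_left_le)
      then show ?case by (simp add: abs_le_iff)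
    qed
  qed (fact indep)
  have "(\<Sum>i\<in>J. P.expectation (\<lambda>\<omega>. c i * \<omega> i)) = (\<Sum>i\<in>J. c i * (\<integral>y. y \<partial>M i))"
    using J M by (intro sum.cong refl) (auto simp: integral_PiM_component)
  then show ?thesis using H.Hoeffding_ineq_abs_ge[OF \<epsilon>] pos by simp
qed

text \<open>By continuity the condition for all real \<open>\<theta>\<close> reduces to the countably many rational ones.\<close>

lemma sets_Collect_forall_abs_le:
  fixes f :: "'a \<Rightarrow> real \<Rightarrow> real"
  assumes cont: "\<And>\<omega>. continuous_on UNIV (f \<omega>)" and meas: "\<And>\<theta>. (\<lambda>\<omega>. f \<omega> \<theta>) \<in> borel_measurable M"
  shows "{\<omega> \<in> space M. \<forall>\<theta>. \<bar>f \<omega> \<theta>\<bar> \<le> \<delta>} \<in> sets M"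
proof -
  have "(\<forall>\<theta>. \<bar>f \<omega> \<theta>\<bar> \<le> \<delta>) \<longleftrightarrow> (\<forall>q::rat. \<bar>f \<omega> (of_rat q)\<bar> \<le> \<delta>)" for \<omega>
  proof
    assume "\<forall>q::rat. \<bar>f \<omega> (of_rat q)\<bar> \<le> \<delta>"
    then have "\<rat> \<subseteq> {\<theta>. \<bar>f \<omega> \<theta>\<bar> \<le> \<delta>}" by (auto simp: Rats_def)
    moreover have "closed {\<theta>. \<bar>f \<omega> \<theta>\<bar> \<le> \<delta>}"
      using cont by (intro closed_Collect_le continuous_intros) auto
    ultimately have "closure \<rat> \<subseteq> {\<theta>. \<bar>f \<omega> \<theta>\<bar> \<le> \<delta>}" by (rule closure_minimal)
    then show "\<forall>\<theta>. \<bar>f \<omega> \<theta>\<bar> \<le> \<delta>" by (auto simp: Rats_closure_real)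
  qed simp
  then have "{\<omega> \<in> space M. \<forall>\<theta>. \<bar>f \<omega> \<theta>\<bar> \<le> \<delta>} = {\<omega> \<in> space M. \<forall>q::rat. \<bar>f \<omega> (of_rat q)\<bar> \<le> \<delta>}"
    by simp
  also have "\<dots> \<in> sets M"
  proof (rule sets.sets_Collect_countable_All)
    fix q :: rat
    note meas[of "of_rat q", measurable]
    show "{\<omega> \<in> space M. \<bar>f \<omega> (of_rat q)\<bar> \<le> \<delta>} \<in> sets M" by measurable
  qed
  finally show ?thesis .
qed

lemma lift_Suc_mono_less_upto:
  fixes x :: "nat \<Rightarrow> 'a::order"
  assumes "\<forall>j<m. x j < x (Suc j)" "i < j" "j \<le> m"
  shows "x i < x j"
  using assms(2,3)
proof (induction j)
  case (Suc j)
  then show ?case using assms(1) by (cases "i = j") (auto intro: order.strict_trans)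
qed simp

lemma gam_nonzero:
  assumes "x 0 = 1" "\<forall>j<m. x j < x (Suc j)" "j \<le> m"
  shows "gam x m j \<noteq> 0"
proof -
  have "x l \<noteq> 0" "x j \<noteq> x l" if l: "l \<in> {0..m} - {j}" for l
  proof -
    show "x l \<noteq> 0"
      using assms(1) lift_Suc_mono_less_upto[OF assms(2), of 0 l] l by (cases "l = 0") auto
    show "x j \<noteq> x l"
      using lift_Suc_mono_less_upto[OF assms(2), of j l] lift_Suc_mono_less_upto[OF assms(2), of l j] l assms(3)
      by (cases "j < l") auto
  qed
  then show ?thesis unfolding gam_def by (simp add: prod_zero_iff)
qed

lemma max_gam_bounds:
  assumes "\<And>j. j \<le> m \<Longrightarrow> gam x m j \<noteq> 0"
  shows "0 < max_gam x m" "max_gam x m \<le> Lam x m"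
proof -
  have fin: "finite ((\<lambda>j. \<bar>gam x m j\<bar>) ` {0..m})" by simp
  have "0 < \<bar>gam x m 0\<bar>" using assms[of 0] by simp
  also have "\<bar>gam x m 0\<bar> \<le> max_gam x m" unfolding max_gam_def by (rule Max_ge[OF fin]) auto
  finally show "0 < max_gam x m" .
  have "max_gam x m \<in> (\<lambda>j. \<bar>gam x m j\<bar>) ` {0..m}"
    unfolding max_gam_def by (rule Max_in[OF fin]) auto
  then obtain j where "j \<le> m" "max_gam x m = \<bar>gam x m j\<bar>" by auto
  then show "max_gam x m \<le> Lam x m"
    unfolding Lam_def by (simp add: member_le_sum[where f="\<lambda>j. \<bar>gam x m j\<bar>"])
qed

lemma shots_ge: "real Nk * \<bar>gam x m j\<bar> / Lam x m \<le> real (shots x m Nk j)"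
  unfolding shots_def by (rule real_nat_ceiling_ge)

lemma shots_pos:
  assumes gam: "\<And>j. j \<le> m \<Longrightarrow> gam x m j \<noteq> 0" and "0 < Nk" "j \<le> m"
  shows "0 < shots x m Nk j"
proof -
  have "0 < Lam x m" using max_gam_bounds[OF gam] by linarith
  then have "0 < real Nk * \<bar>gam x m j\<bar> / Lam x m" using assms by simp
  then show ?thesis using shots_ge[of Nk x m j] by linarith
qed

lemma sum_gam_sq_div_shots_le:
  assumes gam: "\<And>j. j \<le> m \<Longrightarrow> gam x m j \<noteq> 0" and Nk: "0 < Nk"
  shows "(\<Sum>j\<le>m. (gam x m j)\<^sup>2 / real (shots x m Nk j)) \<le> (Lam x m)\<^sup>2 / real Nk"
proof -
  have L: "0 < Lam x m" using max_gam_bounds[OF gam] by linarith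
  have "(gam x m j)\<^sup>2 / real (shots x m Nk j) \<le> Lam x m / real Nk * \<bar>gam x m j\<bar>" if "j \<le> m" for j
  proof -
    have g: "0 < \<bar>gam x m j\<bar>" using gam that by simp
    have lb: "0 < real Nk * \<bar>gam x m j\<bar> / Lam x m" using g Nk L by simp
    then have "0 < real (shots x m Nk j)" using shots_ge[of Nk x m j] by linarith
    then have "(gam x m j)\<^sup>2 / real (shots x m Nk j) \<le> (gam x m j)\<^sup>2 / (real Nk * \<bar>gam x m j\<bar> / Lam x m)"
      using shots_ge[of Nk x m j] lb by (intro divide_left_mono mult_pos_pos) auto
    also have "\<dots> = Lam x m / real Nk * \<bar>gam x m j\<bar>"
      using g by (cases "gam x m j \<ge> 0") (simp_all add: power2_eq_square field_simps)
    finally show ?thesis .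
  qed
  then have "(\<Sum>j\<le>m. (gam x m j)\<^sup>2 / real (shots x m Nk j)) \<le> (\<Sum>j\<le>m. Lam x m / real Nk * \<bar>gam x m j\<bar>)"
    by (intro sum_mono) auto
  also have "\<dots> = (Lam x m)\<^sup>2 / real Nk"
    by (simp only: sum_distrib_left[symmetric]) (simp add: Lam_def power2_eq_square)
  finally show ?thesis .
qed

section \<open>Concentration of the interpolant\<close>

lemma finite_idx: "finite (idx n m x N)"
proof -
  have "idx n m x N = Sigma {..<2*n+1} (\<lambda>k. Sigma {..m} (\<lambda>j. {..<shots x m (N k) j}))"
    unfolding idx_def by auto
  then show ?thesis by simp
qed

definition node_shots :: "(nat \<Rightarrow> real) \<Rightarrow> nat \<Rightarrow> (nat \<Rightarrow> nat) \<Rightarrow> nat \<Rightarrow> (nat \<times> nat \<times> nat) set" where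
  "node_shots x m N k = {k} \<times> Sigma {..m} (\<lambda>j. {..<shots x m (N k) j})"

definition shot_weight :: "(nat \<Rightarrow> real) \<Rightarrow> nat \<Rightarrow> (nat \<Rightarrow> nat) \<Rightarrow> nat \<times> nat \<times> nat \<Rightarrow> real" where
  "shot_weight x m N i = (case i of (k, j, s) \<Rightarrow> gam x m j / real (shots x m (N k) j))"

lemma sum_node_shots:
  fixes f :: "nat \<times> nat \<times> nat \<Rightarrow> real"
  shows "(\<Sum>i\<in>node_shots x m N k. f i) = (\<Sum>j\<le>m. \<Sum>s<shots x m (N k) j. f (k, j, s))"
proof -
  define sh where "sh j = shots x m (N k) j" for j
  have "(\<Sum>i\<in>node_shots x m N k. f i) = (\<Sum>k'\<in>{k}. \<Sum>p\<in>Sigma {..m} (\<lambda>j. {..<sh j}). f (k', p))"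
    unfolding node_shots_def sh_def[symmetric] by (subst sum.Sigma) auto
  also have "\<dots> = (\<Sum>j\<le>m. \<Sum>s<sh j. f (k, j, s))"
    by (subst sum.Sigma) auto
  finally show ?thesis by (simp add: sh_def)
qed

lemma node_shots_subset_idx: "k < 2*n+1 \<Longrightarrow> node_shots x m N k \<subseteq> idx n m x N"
  by (auto simp: node_shots_def idx_def)

lemma est_eq_sum_node_shots: "est x m N \<omega> k = (\<Sum>i\<in>node_shots x m N k. shot_weight x m N i * \<omega> i)"
  unfolding sum_node_shots est_def by (simp add: shot_weight_def sum_distrib_left sum_divide_distrib)

lemma RM_node_eq_sum_node_shots:
  assumes "\<And>j. j \<le> m \<Longrightarrow> gam x m j \<noteq> 0" and "0 < N k"
  shows "RM D x lam m (node n k) = (\<Sum>i\<in>node_shots x m N k.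
           shot_weight x m N i * (\<integral>y. y \<partial>(case i of (k, j, s) \<Rightarrow> D (x j * lam) (node n k))))"
  unfolding sum_node_shots RM_def
  using shots_pos[OF assms] by (intro sum.cong refl) (simp add: shot_weight_def resp_def)

lemma sum_sq_shot_weight_bounds:
  assumes gam: "\<And>j. j \<le> m \<Longrightarrow> gam x m j \<noteq> 0" and Nk: "0 < N k"
  shows "0 < (\<Sum>i\<in>node_shots x m N k. (2 * \<bar>shot_weight x m N i\<bar>)\<^sup>2)"
    "(\<Sum>i\<in>node_shots x m N k. (2 * \<bar>shot_weight x m N i\<bar>)\<^sup>2) \<le> 4 * (Lam x m)\<^sup>2 / real (N k)"
proof -
  let ?q = "\<lambda>j. (gam x m j)\<^sup>2 / real (shots x m (N k) j)"
  have sh: "0 < real (shots x m (N k) j)" if "j \<le> m" for j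
    using shots_pos[OF gam Nk that] by simp
  have eq: "(\<Sum>i\<in>node_shots x m N k. (2 * \<bar>shot_weight x m N i\<bar>)\<^sup>2) = 4 * (\<Sum>j\<le>m. ?q j)"
    unfolding sum_node_shots sum_distrib_left
    using sh by (intro sum.cong refl) (force simp: shot_weight_def power2_eq_square field_simps)
  have "0 < ?q 0" using gam[of 0] sh[of 0] by simp
  also have "\<dots> \<le> (\<Sum>j\<le>m. ?q j)"
    by (rule member_le_sum) (use sh in auto)
  finally show "0 < (\<Sum>i\<in>node_shots x m N k. (2 * \<bar>shot_weight x m N i\<bar>)\<^sup>2)"
    unfolding eq by simp
  show "(\<Sum>i\<in>node_shots x m N k. (2 * \<bar>shot_weight x m N i\<bar>)\<^sup>2) \<le> 4 * (Lam x m)\<^sup>2 / real (N k)"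
    unfolding eq using sum_gam_sq_div_shots_le[OF gam Nk] by simp
qed

lemma borel_measurable_est:
  fixes M :: "nat \<times> nat \<times> nat \<Rightarrow> real measure"
  assumes "\<And>i. i \<in> I \<Longrightarrow> sets (M i) = sets borel"
  shows "(\<lambda>\<omega>. est x m N \<omega> k) \<in> borel_measurable (PiM I M)"
  unfolding est_def
  by (intro borel_measurable_sum borel_measurable_times borel_measurable_divide
        borel_measurable_const borel_measurable_PiM_component[OF assms]) auto

lemma est_tail_bound:
  assumes D: "\<And>l \<theta>. prob_space (D l \<theta>)" "\<And>l \<theta>. sets (D l \<theta>) = sets borel"
      "\<And>l \<theta>. AE y in D l \<theta>. \<bar>y\<bar> \<le> 1"
    and gam: "\<And>j. j \<le> m \<Longrightarrow> gam x m j \<noteq> 0" and Nk: "0 < N k" and k: "k < 2*n+1" and t: "0 \<le> t"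
  shows "measure (sample_space n m x lam D N)
           {\<omega> \<in> space (sample_space n m x lam D N). t \<le> \<bar>est x m N \<omega> k - RM D x lam m (node n k)\<bar>}
         \<le> 2 * exp (- (t\<^sup>2 * real (N k)) / (2 * (Lam x m)\<^sup>2))"
proof -
  define M where "M = (\<lambda>i :: nat \<times> nat \<times> nat. case i of (k, j, s) \<Rightarrow> D (x j * lam) (node n k))"
  define S where "S = (\<Sum>i\<in>node_shots x m N k. (2 * \<bar>shot_weight x m N i\<bar>)\<^sup>2)"
  have S_pos: "0 < S" unfolding S_def using gam Nk by (rule sum_sq_shot_weight_bounds(1))
  have S_le: "S \<le> 4 * (Lam x m)\<^sup>2 / real (N k)"
    unfolding S_def using gam Nk by (rule sum_sq_shot_weight_bounds(2))
  have RM: "RM D x lam m (node n k) = (\<Sum>i\<in>node_shots x m N k. shot_weight x m N i * (\<integral>y. y \<partial>M i))"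
    unfolding M_def using gam Nk by (rule RM_node_eq_sum_node_shots)
  have M: "prob_space (M i)" "sets (M i) = sets borel" "AE y in M i. \<bar>y\<bar> \<le> 1" for i
  proof -
    obtain a b c where i: "i = (a, b, c)" by (rule prod_cases3)
    show "prob_space (M i)" "sets (M i) = sets borel" "AE y in M i. \<bar>y\<bar> \<le> 1"
      unfolding M_def i prod.case by (fact D)+
  qed
  have J: "node_shots x m N k \<subseteq> idx n m x N" using k by (rule node_shots_subset_idx)
  have "measure (PiM (idx n m x N) M) {\<omega> \<in> space (PiM (idx n m x N) M).
      t \<le> \<bar>(\<Sum>i\<in>node_shots x m N k. shot_weight x m N i * \<omega> i) -
        (\<Sum>i\<in>node_shots x m N k. shot_weight x m N i * (\<integral>y. y \<partial>M i))\<bar>} \<le> 2 * exp (-2 * t\<^sup>2 / S)"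
    unfolding S_def using S_pos[unfolded S_def] by (rule hoeffding_PiM_weighted_sum[OF finite_idx M J t])
  then have "measure (sample_space n m x lam D N)
      {\<omega> \<in> space (sample_space n m x lam D N). t \<le> \<bar>est x m N \<omega> k - RM D x lam m (node n k)\<bar>}
    \<le> 2 * exp (-2 * t\<^sup>2 / S)"
    unfolding sample_space_def M_def[symmetric] RM est_eq_sum_node_shots .
  also have "-2 * t\<^sup>2 / S \<le> - (t\<^sup>2 * real (N k)) / (2 * (Lam x m)\<^sup>2)"
  proof -
    have "t\<^sup>2 * real (N k) / (2 * (Lam x m)\<^sup>2) = 2 * t\<^sup>2 / (4 * (Lam x m)\<^sup>2 / real (N k))"
      using Nk by (simp add: field_simps)
    also have "\<dots> \<le> 2 * t\<^sup>2 / S"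
      using S_pos S_le by (intro divide_left_mono mult_pos_pos) auto
    finally show ?thesis by simp
  qed
  finally show ?thesis by simp
qed

lemma interp_error_prob_ge:
  assumes D: "\<And>l \<theta>. prob_space (D l \<theta>)" "\<And>l \<theta>. sets (D l \<theta>) = sets borel"
      "\<And>l \<theta>. AE y in D l \<theta>. \<bar>y\<bar> \<le> 1"
    and gam: "\<And>j. j \<le> m \<Longrightarrow> gam x m j \<noteq> 0" and n: "1 \<le> n" and R: "trig_poly n (RM D x lam m)"
    and t: "0 < t" and N: "\<And>k. k < 2*n+1 \<Longrightarrow> 0 < N k"
  shows "1 - (\<Sum>k<2*n+1. 2 * exp (- (t\<^sup>2 * real (N k)) / (2 * (Lam x m)\<^sup>2))) \<le>
    measure (sample_space n m x lam D N) {\<omega> \<in> space (sample_space n m x lam D N).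
      \<forall>\<theta>. \<bar>RM D x lam m \<theta> - interp n (est x m N \<omega>) \<theta>\<bar> \<le> 12 * ln (real n + 1) * t}"
    (is "_ \<le> measure ?P ?G")
proof -
  define E where "E k = {\<omega> \<in> space ?P. t \<le> \<bar>est x m N \<omega> k - RM D x lam m (node n k)\<bar>}" for k
  have sets_M: "sets (case i of (k, j, s) \<Rightarrow> D (x j * lam) (node n k)) = sets borel" for i
    using D(2) by (simp split: prod.split)
  interpret prob_space ?P
    unfolding sample_space_def by (rule prob_space_PiM) (simp add: D(1) split: prod.split)
  have est_meas: "(\<lambda>\<omega>. est x m N \<omega> k) \<in> borel_measurable ?P" for k
    unfolding sample_space_def by (rule borel_measurable_est[OF sets_M])
  have E_sets: "E k \<in> sets ?P" for k
    unfolding E_def using est_meas[of k] by measurable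
  have "?G \<in> sets ?P"
  proof (rule sets_Collect_forall_abs_le)
    show "continuous_on UNIV (\<lambda>\<theta>. RM D x lam m \<theta> - interp n (est x m N \<omega>) \<theta>)" for \<omega>
      using R trig_poly_lagrange_sum unfolding interp_eq_lagrange_sum
      by (intro continuous_on_diff trig_poly_continuous)
    show "(\<lambda>\<omega>. RM D x lam m \<theta> - interp n (est x m N \<omega>) \<theta>) \<in> borel_measurable ?P" for \<theta>
      unfolding interp_eq_lagrange_sum using est_meas by measurable
  qed
  moreover have "space ?P - (\<Union>k<2*n+1. E k) \<subseteq> ?G"
    using interp_error_le[OF n R] by (force simp: E_def abs_minus_commute)
  ultimately have "prob (space ?P - (\<Union>k<2*n+1. E k)) \<le> prob ?G"
    by (intro finite_measure_mono)
  moreover have "prob (\<Union>k<2*n+1. E k) \<le> (\<Sum>k<2*n+1. 2 * exp (- (t\<^sup>2 * real (N k)) / (2 * (Lam x m)\<^sup>2)))"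
  proof -
    have "prob (\<Union>k<2*n+1. E k) \<le> (\<Sum>k<2*n+1. prob (E k))"
      using E_sets by (intro finite_measure_subadditive_finite) auto
    also have "\<dots> \<le> (\<Sum>k<2*n+1. 2 * exp (- (t\<^sup>2 * real (N k)) / (2 * (Lam x m)\<^sup>2)))"
      unfolding E_def using D gam N t by (intro sum_mono est_tail_bound) auto
    finally show ?thesis .
  qed
  moreover have "prob (space ?P - (\<Union>k<2*n+1. E k)) = 1 - prob (\<Union>k<2*n+1. E k)"
    using E_sets by (intro prob_compl) auto
  ultimately show ?thesis by linarith
qed

lemma ln_union_bound_le:
  assumes \<eta>: "0 < \<eta>" "\<eta> < 1" and n: "1 \<le> n"
  shows "ln (2 * real (2*n+1) / \<eta>) \<le> (3 + 2 * ln (1 / \<eta>)) * ln (real n + 1)"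
proof -
  define L where "L = ln (real n + 1)"
  have ln2: "ln 2 \<le> L" unfolding L_def using n by (intro ln_mono) auto
  have "ln (2 * real (2*n+1) / \<eta>) = ln (2 * real (2*n+1)) + ln (1 / \<eta>)"
    using \<eta> by (simp add: ln_div ln_mult)
  also have "ln (2 * real (2*n+1)) \<le> ln (4 * (real n + 1))"
    by (intro ln_mono) auto
  also have "\<dots> = 2 * ln 2 + L"
    using ln_mult_pos[of 4 "real n + 1"] ln_realpow[of 2 2] by (simp add: L_def)
  also have "2 * ln 2 + L + ln (1 / \<eta>) \<le> (3 + 2 * ln (1 / \<eta>)) * L"
  proof -
    have "ln (1 / \<eta>) * 1 \<le> ln (1 / \<eta>) * (2 * L)"
      using \<eta> ln2 ln2_ge_two_thirds by (intro mult_left_mono) auto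
    then show ?thesis using ln2 by (simp add: algebra_simps)
  qed
  finally show ?thesis by (simp add: L_def)
qed

text \<open>
  The node tolerance is \<open>t = \<delta> / (12 L)\<close>, with \<open>12 L\<close> the bound on the Lebesgue constant;
  the factor \<open>288 = 2 * 12\<^sup>2\<close> makes the Hoeffding exponent at least \<open>ln (2 (2n+1) / \<eta>)\<close>.
\<close>

lemma exp_tail_le_of_shots_ge:
  fixes \<Lambda> g \<delta> \<eta> Nk :: real and n :: nat
  defines "L \<equiv> ln (real n + 1)"
  assumes \<eta>: "0 < \<eta>" "\<eta> < 1" and n: "1 \<le> n" and g: "0 < g" "g \<le> \<Lambda>" and \<delta>: "0 < \<delta>"
    and Nk: "288 * (3 + 2 * ln (1 / \<eta>)) * \<Lambda> ^ 3 * L ^ 3 / (g * \<delta>\<^sup>2) \<le> Nk"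
  shows "0 < Nk" "2 * exp (- ((\<delta> / (12 * L))\<^sup>2 * Nk) / (2 * \<Lambda>\<^sup>2)) \<le> \<eta> / real (2*n+1)"
proof -
  define K where "K = 3 + 2 * ln (1 / \<eta>)"
  have "ln 2 \<le> L" unfolding L_def using n by (intro ln_mono) auto
  then have L: "2/3 \<le> L" using ln2_ge_two_thirds by linarith
  have "0 < ln (1 / \<eta>)" using \<eta> by simp
  then have K: "0 < K" by (simp add: K_def)
  have pos: "0 < 288 * K * \<Lambda>\<^sup>2 * L ^ 3 / \<delta>\<^sup>2" using K L g \<delta> by simp
  moreover have "1 \<le> \<Lambda> / g" using g by simp
  ultimately have "288 * K * \<Lambda>\<^sup>2 * L ^ 3 / \<delta>\<^sup>2 \<le> (288 * K * \<Lambda>\<^sup>2 * L ^ 3 / \<delta>\<^sup>2) * (\<Lambda> / g)"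
    using mult_left_mono[of 1 "\<Lambda> / g" "288 * K * \<Lambda>\<^sup>2 * L ^ 3 / \<delta>\<^sup>2"] by simp
  also have "\<dots> \<le> Nk"
    using Nk g \<delta> by (simp add: K_def power2_eq_square power3_eq_cube field_simps)
  finally have Nk': "288 * K * \<Lambda>\<^sup>2 * L ^ 3 / \<delta>\<^sup>2 \<le> Nk" .
  with pos show "0 < Nk" by linarith
  have "ln (2 * real (2*n+1) / \<eta>) \<le> K * L"
    unfolding K_def L_def using \<eta> n by (rule ln_union_bound_le)
  also have "K * L = (\<delta> / (12 * L))\<^sup>2 * (288 * K * \<Lambda>\<^sup>2 * L ^ 3 / \<delta>\<^sup>2) / (2 * \<Lambda>\<^sup>2)"
    using g \<delta> L by (simp add: power2_eq_square power3_eq_cube field_simps)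
  also have "\<dots> \<le> (\<delta> / (12 * L))\<^sup>2 * Nk / (2 * \<Lambda>\<^sup>2)"
    using Nk' by (intro divide_right_mono mult_left_mono) auto
  finally have "exp (- ((\<delta> / (12 * L))\<^sup>2 * Nk) / (2 * \<Lambda>\<^sup>2)) \<le> exp (- ln (2 * real (2*n+1) / \<eta>))"
    by simp
  also have "\<dots> = \<eta> / (2 * real (2*n+1))"
    using \<eta> by (simp add: exp_minus)
  finally show "2 * exp (- ((\<delta> / (12 * L))\<^sup>2 * Nk) / (2 * \<Lambda>\<^sup>2)) \<le> \<eta> / real (2*n+1)"
    by (simp add: field_simps)
qed

lemma interp_error_le_delta_prob_ge:
  fixes \<eta> \<delta> :: real
  assumes \<eta>: "0 < \<eta>" "\<eta> < 1" and n: "1 \<le> n" and x0: "x 0 = 1" and x: "\<forall>j<m. x j < x (Suc j)"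
    and \<delta>: "0 < \<delta>"
    and D: "\<forall>l \<theta>. prob_space (D l \<theta>) \<and> sets (D l \<theta>) = sets borel \<and> (AE y in D l \<theta>. \<bar>y\<bar> \<le> 1)"
    and R: "trig_poly n (RM D x lam m)"
    and N: "\<And>k. k < 2*n+1 \<Longrightarrow>
      288 * (3 + 2 * ln (1 / \<eta>)) * Lam x m ^ 3 * ln (real n + 1) ^ 3 / (max_gam x m * \<delta>\<^sup>2) \<le> real (N k)"
  shows "1 - \<eta> \<le> measure (sample_space n m x lam D N) {\<omega> \<in> space (sample_space n m x lam D N).
           \<forall>\<theta>. \<bar>RM D x lam m \<theta> - interp n (est x m N \<omega>) \<theta>\<bar> \<le> \<delta>}"
proof -
  define t where "t = \<delta> / (12 * ln (real n + 1))"
  have gam: "\<And>j. j \<le> m \<Longrightarrow> gam x m j \<noteq> 0" using gam_nonzero[OF x0 x] .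
  have tail: "0 < N k" "2 * exp (- (t\<^sup>2 * real (N k)) / (2 * (Lam x m)\<^sup>2)) \<le> \<eta> / real (2*n+1)"
    if "k < 2*n+1" for k
    using exp_tail_le_of_shots_ge[OF \<eta> n max_gam_bounds[OF gam] \<delta> N[OF that]] by (simp_all add: t_def)
  have "(\<Sum>k<2*n+1. 2 * exp (- (t\<^sup>2 * real (N k)) / (2 * (Lam x m)\<^sup>2))) \<le> (\<Sum>k<2*n+1. \<eta> / real (2*n+1))"
    by (intro sum_mono tail(2)) simp
  then have "1 - \<eta> \<le> 1 - (\<Sum>k<2*n+1. 2 * exp (- (t\<^sup>2 * real (N k)) / (2 * (Lam x m)\<^sup>2)))"
    by simp
  also have "\<dots> \<le> measure (sample_space n m x lam D N) {\<omega> \<in> space (sample_space n m x lam D N).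
      \<forall>\<theta>. \<bar>RM D x lam m \<theta> - interp n (est x m N \<omega>) \<theta>\<bar> \<le> 12 * ln (real n + 1) * t}"
    using D gam n R \<delta> tail(1) by (intro interp_error_prob_ge) (auto simp: t_def)
  also have "12 * ln (real n + 1) * t = \<delta>"
    using ln_gt_zero[of "real n + 1"] n by (simp add: t_def)
  finally show ?thesis .
qed

theorem mainTheorem3:
  fixes \<eta> :: real
  assumes "0 < \<eta>" and "\<eta> < 1"
  shows "\<exists>C>0. \<forall>(n::nat) (m::nat) (x::nat \<Rightarrow> real) (lam::real)
            (D::real \<Rightarrow> real \<Rightarrow> real measure) (N::nat \<Rightarrow> nat) (\<delta>::real).
     (n \<ge> 1 \<and> lam > 0 \<and> x 0 = 1 \<and> (\<forall>j<m. x j < x (Suc j)) \<and> \<delta> > 0 \<and>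
      (\<forall>l \<theta>. prob_space (D l \<theta>) \<and> sets (D l \<theta>) = sets borel \<and>
              (AE y in D l \<theta>. \<bar>y\<bar> \<le> 1)) \<and>
      trig_poly n (RM D x lam m) \<and>
      (\<forall>k<2 * n + 1. real (N k) \<ge>
          C * Lam x m ^ 3 * ln (real n + 1) ^ 3 / (max_gam x m * \<delta>\<^sup>2)))
     \<longrightarrow> measure (sample_space n m x lam D N)
           {\<omega> \<in> space (sample_space n m x lam D N).
              \<forall>\<theta>. \<bar>RM D x lam m \<theta> - interp n (est x m N \<omega>) \<theta>\<bar> \<le> \<delta>} \<ge> 1 - \<eta>"
proof -
  define C where "C = 288 * (3 + 2 * ln (1 / \<eta>))"
  have "0 < ln (1 / \<eta>)" using assms by simp
  then have "0 < C" by (simp add: C_def)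
  then show ?thesis
    using interp_error_le_delta_prob_ge[OF assms] unfolding C_def by blast
qed

end
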